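(* Let $F=G/H=G^{\mathbb C}/P$ be a (pseudo-Riemannian) flag manifold and let $J,J'$ be two $G$-invariant complex structures on $F$. Then all Koszul numbers of $J$ are even if and only if all Koszul numbers of $J'$ are even; i.e. divisibility by two of the Koszul numbers does not depend on the invariant complex structure.
   Context: $G$ is a compact connected simply-connected semisimple Lie group, $H$ the centralizer of a torus. Invariant complex structures on $F$ correspond to systems of simple roots $\Pi=\Pi_W\sqcup\Pi_B$ of $\mathfrak g^{\mathbb C}$ with $\Pi_W$ a system of simple roots of the root system $R_H$ of $\mathfrak h^{\mathbb C}$, $\Pi_B=\{\beta_1,\dots,\beta_v\}$. The Koszul form is $\sigma^J=\sum_{\alpha\in R^+\setminus R_H}\alpha=\sum_j k_j\Lambda_j$ with $\Lambda_j$ the fundamental weight of $\beta_j$; the $k_j$ are the Koszul numbers of $J$. *)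

theory Defs
  imports "HOL-Analysis.Analysis"
begin

text \<open>Reduced crystallographic root system spanning the Euclidean space 'a
  (= root system of a complex semisimple Lie algebra, with the Killing-form
  induced inner product on the real span of the roots).\<close>
definition root_system :: "'a::euclidean_space set \<Rightarrow> bool" where
  "root_system R \<longleftrightarrow> finite R \<and> 0 \<notin> R \<and> span R = UNIV \<and>
     (\<forall>\<alpha>\<in>R. \<forall>\<beta>\<in>R. \<beta> - (2 * (\<beta> \<bullet> \<alpha>) / (\<alpha> \<bullet> \<alpha>)) *\<^sub>R \<alpha> \<in> R) \<and>
     (\<forall>\<alpha>\<in>R. \<forall>\<beta>\<in>R. 2 * (\<beta> \<bullet> \<alpha>) / (\<alpha> \<bullet> \<alpha>) \<in> \<int>) \<and>
     (\<forall>\<alpha>\<in>R. \<forall>c::real. c *\<^sub>R \<alpha> \<in> R \<longrightarrow> c = 1 \<or> c = -1)"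

definition simple_system :: "'a::euclidean_space set \<Rightarrow> 'a set \<Rightarrow> bool" where
  "simple_system S P \<longleftrightarrow> P \<subseteq> S \<and> independent P \<and>
     (\<forall>\<alpha>\<in>S. \<exists>c::'a \<Rightarrow> int. \<alpha> = (\<Sum>\<beta>\<in>P. of_int (c \<beta>) *\<^sub>R \<beta>) \<and>
        ((\<forall>\<beta>\<in>P. c \<beta> \<ge> 0) \<or> (\<forall>\<beta>\<in>P. c \<beta> \<le> 0)))"

definition pos_roots :: "'a::euclidean_space set \<Rightarrow> 'a set \<Rightarrow> 'a set" where
  "pos_roots R P = {\<alpha>\<in>R. \<exists>c::'a \<Rightarrow> int. \<alpha> = (\<Sum>\<beta>\<in>P. of_int (c \<beta>) *\<^sub>R \<beta>) \<and> (\<forall>\<beta>\<in>P. c \<beta> \<ge> 0)}"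

text \<open>Root system R_H of the centralizer H of a torus: the roots vanishing on
  a (generic) element x of the Lie algebra of the torus.\<close>
definition centralizer_roots :: "'a::euclidean_space set \<Rightarrow> 'a \<Rightarrow> 'a set" where
  "centralizer_roots R x = {\<alpha>\<in>R. \<alpha> \<bullet> x = 0}"

text \<open>Invariant complex structures on F = G/H correspond to simple systems P of R
  such that P_W = P \<inter> R_H is a simple system of R_H; then P_B = P - R_H.\<close>
definition invariant_complex_structure :: "'a::euclidean_space set \<Rightarrow> 'a set \<Rightarrow> 'a set \<Rightarrow> bool" where
  "invariant_complex_structure R RH P \<longleftrightarrow> simple_system R P \<and> simple_system RH (P \<inter> RH)"

definition koszul_form :: "'a::euclidean_space set \<Rightarrow> 'a set \<Rightarrow> 'a set \<Rightarrow> 'a" where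
  "koszul_form R RH P = (\<Sum>\<alpha>\<in>pos_roots R P - RH. \<alpha>)"

text \<open>Koszul number k_j: coefficient of the fundamental weight of beta_j in the
  Koszul form, i.e. the pairing with the coroot of beta_j.\<close>
definition koszul_number :: "'a::euclidean_space set \<Rightarrow> 'a set \<Rightarrow> 'a set \<Rightarrow> 'a \<Rightarrow> real" where
  "koszul_number R RH P \<beta> = 2 * (koszul_form R RH P \<bullet> \<beta>) / (\<beta> \<bullet> \<beta>)"

end

theory Submission
  imports Defs
begin

text \<open>For every root \<open>\<alpha>\<close>, the Koszul form paired with the coroot \<open>\<alpha>\<^sup>\<or>\<close> is
  \<open>\<Sum>\<gamma> \<in> R\<^sup>+ - R\<^sub>H. \<langle>\<gamma>, \<alpha>\<^sup>\<or>\<rangle>\<close>, a sum of integers. Changing the complex structure changes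
  \<open>R\<^sup>+ - R\<^sub>H\<close> only by replacing some roots \<open>\<gamma>\<close> by \<open>-\<gamma>\<close>, which changes the sum by an even
  integer; so the parity of this pairing at every root does not depend on \<open>J\<close>.
  It remains to see that the Koszul numbers are all even iff the pairing is even at every
  root. At a simple root of \<open>R\<^sub>H\<close> the pairing vanishes, because the corresponding simple
  reflection permutes \<open>R\<^sup>+ - R\<^sub>H\<close>; and every coroot is an integral combination of simple
  coroots, which is shown by descending induction on the height through simple reflections.\<close>

definition real_even :: "real \<Rightarrow> bool" where
  "real_even r \<longleftrightarrow> (\<exists>m::int. r = 2 * of_int m)"

lemma real_even_add: "real_even a \<Longrightarrow> real_even b \<Longrightarrow> real_even (a + b)"
  unfolding real_even_def by (metis distrib_left of_int_add)

lemma real_even_minus: "real_even a \<Longrightarrow> real_even (- a)"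
  unfolding real_even_def by (metis mult_minus_right of_int_minus)

lemma real_even_mult_Ints: "c \<in> \<int> \<Longrightarrow> real_even a \<Longrightarrow> real_even (c * a)"
  unfolding real_even_def by (elim Ints_cases exE) (metis mult.left_commute of_int_mult)

lemma real_even_diff_iff: "real_even (a - b) \<Longrightarrow> real_even a \<longleftrightarrow> real_even b"
  by (metis add_diff_cancel_left' diff_add_cancel diff_minus_eq_add real_even_add real_even_minus)

definition coroot :: "'a::real_inner \<Rightarrow> 'a" where
  "coroot \<alpha> = (2 / (\<alpha> \<bullet> \<alpha>)) *\<^sub>R \<alpha>"

definition reflection :: "'a::real_inner \<Rightarrow> 'a \<Rightarrow> 'a" where
  "reflection \<alpha> \<gamma> = \<gamma> - (\<gamma> \<bullet> coroot \<alpha>) *\<^sub>R \<alpha>"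

lemma inner_coroot_self: "\<alpha> \<noteq> 0 \<Longrightarrow> \<alpha> \<bullet> coroot \<alpha> = 2"
  by (simp add: coroot_def)

lemma coroot_minus: "coroot (- \<alpha>) = - coroot \<alpha>"
  by (simp add: coroot_def)

lemma inner_reflection_coroot: "\<alpha> \<noteq> 0 \<Longrightarrow> reflection \<alpha> \<gamma> \<bullet> coroot \<alpha> = - (\<gamma> \<bullet> coroot \<alpha>)"
  by (simp add: reflection_def inner_diff_left inner_coroot_self)

lemma reflection_reflection: "\<alpha> \<noteq> 0 \<Longrightarrow> reflection \<alpha> (reflection \<alpha> \<gamma>) = \<gamma>"
  by (simp add: reflection_def [of \<alpha> "reflection \<alpha> \<gamma>"] inner_reflection_coroot)
     (simp add: reflection_def)

lemma inner_reflection_reflection: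
  assumes "\<alpha> \<noteq> 0"
  shows "reflection \<alpha> \<gamma> \<bullet> reflection \<alpha> \<delta> = \<gamma> \<bullet> \<delta>"
  using assms
  by (simp add: reflection_def coroot_def inner_diff_left inner_diff_right inner_commute
      field_simps)

lemma coroot_reflection:
  assumes "\<beta> \<noteq> 0" "\<alpha> \<noteq> 0"
  shows "coroot (reflection \<beta> \<alpha>) = coroot \<alpha> - (\<beta> \<bullet> coroot \<alpha>) *\<^sub>R coroot \<beta>"
proof -
  have "reflection \<beta> \<alpha> \<bullet> reflection \<beta> \<alpha> = \<alpha> \<bullet> \<alpha>"
    using assms(1) by (rule inner_reflection_reflection)
  then show ?thesis
    using assms by (simp add: coroot_def reflection_def inner_commute algebra_simps)
qed

lemma root_system_finite: "root_system R \<Longrightarrow> finite R"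
  by (simp add: root_system_def)

lemma root_system_nonzero: "root_system R \<Longrightarrow> \<alpha> \<in> R \<Longrightarrow> \<alpha> \<noteq> 0"
  unfolding root_system_def by blast

lemma root_system_reflection:
  "root_system R \<Longrightarrow> \<alpha> \<in> R \<Longrightarrow> \<gamma> \<in> R \<Longrightarrow> reflection \<alpha> \<gamma> \<in> R"
  unfolding root_system_def reflection_def coroot_def by (simp add: mult.commute)

lemma root_system_pairing_Ints:
  "root_system R \<Longrightarrow> \<alpha> \<in> R \<Longrightarrow> \<gamma> \<in> R \<Longrightarrow> \<gamma> \<bullet> coroot \<alpha> \<in> \<int>"
  unfolding root_system_def coroot_def by (simp add: mult.commute)

lemma root_system_reduced:
  "root_system R \<Longrightarrow> \<alpha> \<in> R \<Longrightarrow> c *\<^sub>R \<alpha> \<in> R \<Longrightarrow> c = 1 \<or> c = -1"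
  unfolding root_system_def by blast

lemma root_system_uminus:
  assumes "root_system R" "\<alpha> \<in> R"
  shows "- \<alpha> \<in> R"
proof -
  have "reflection \<alpha> \<alpha> = - \<alpha>"
    using root_system_nonzero[OF assms] by (simp add: reflection_def inner_coroot_self scaleR_2)
  then show ?thesis
    using root_system_reflection[OF assms assms(2)] by simp
qed

lemma independent_coeffs_eq:
  fixes P :: "'a::euclidean_space set"
  assumes "independent P" "(\<Sum>\<beta>\<in>P. a \<beta> *\<^sub>R \<beta>) = (\<Sum>\<beta>\<in>P. c \<beta> *\<^sub>R \<beta>)" "\<beta> \<in> P"
  shows "a \<beta> = c \<beta>"
proof -
  have "(\<Sum>\<beta>\<in>P. (a \<beta> - c \<beta>) *\<^sub>R \<beta>) = 0"
    using assms(2) by (simp add: scaleR_diff_left sum_subtractf)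
  then show ?thesis
    using assms(1,3) independent_explicit[of P] by auto
qed

lemma simple_system_finite: "simple_system S P \<Longrightarrow> finite P"
  unfolding simple_system_def using independent_bound_general by blast

lemma simple_system_subset: "simple_system S P \<Longrightarrow> P \<subseteq> S"
  by (simp add: simple_system_def)

lemma simple_system_coeffs:
  assumes "simple_system S P" "\<alpha> \<in> S"
  obtains c :: "'a::euclidean_space \<Rightarrow> int"
  where "\<alpha> = (\<Sum>\<beta>\<in>P. of_int (c \<beta>) *\<^sub>R \<beta>)" "(\<forall>\<beta>\<in>P. c \<beta> \<ge> 0) \<or> (\<forall>\<beta>\<in>P. c \<beta> \<le> 0)"
  using assms unfolding simple_system_def by blast

lemma simple_system_int_coeffs_eq:
  assumes "simple_system S P"
    and "(\<Sum>\<beta>\<in>P. of_int (a \<beta>) *\<^sub>R \<beta>) = (\<Sum>\<beta>\<in>P. of_int (c \<beta>) *\<^sub>R \<beta> :: 'a::euclidean_space)"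
    and "\<beta> \<in> P"
  shows "a \<beta> = (c \<beta> :: int)"
  using independent_coeffs_eq[of P "\<lambda>\<beta>. of_int (a \<beta>)" "\<lambda>\<beta>. of_int (c \<beta>)"] assms
  unfolding simple_system_def by simp

definition half :: "'a::real_vector set \<Rightarrow> 'a set \<Rightarrow> bool" where
  "half S A \<longleftrightarrow> A \<subseteq> S \<and> (\<forall>\<gamma>\<in>S. \<gamma> \<in> A \<or> - \<gamma> \<in> A) \<and> (\<forall>\<gamma>\<in>A. - \<gamma> \<notin> A)"

lemma half_Diff:
  assumes "half S A" "\<And>\<gamma>. \<gamma> \<in> T \<Longrightarrow> - \<gamma> \<in> T"
  shows "half (S - T) (A - T)"
proof -
  have "- \<gamma> \<in> T \<longleftrightarrow> \<gamma> \<in> T" for \<gamma>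
    using assms(2)[of "- \<gamma>"] assms(2)[of \<gamma>] by auto
  then show ?thesis
    using assms(1) unfolding half_def by auto
qed

lemma pos_roots_half:
  assumes R: "root_system R" and P: "simple_system R P"
  shows "half R (pos_roots R P)"
  unfolding half_def
proof (intro conjI ballI)
  show "pos_roots R P \<subseteq> R"
    by (auto simp: pos_roots_def)
next
  fix \<gamma> assume "\<gamma> \<in> R"
  then obtain c where c: "\<gamma> = (\<Sum>\<beta>\<in>P. of_int (c \<beta>) *\<^sub>R \<beta>)"
    "(\<forall>\<beta>\<in>P. c \<beta> \<ge> 0) \<or> (\<forall>\<beta>\<in>P. c \<beta> \<le> 0)"
    by (rule simple_system_coeffs[OF P])
  show "\<gamma> \<in> pos_roots R P \<or> - \<gamma> \<in> pos_roots R P"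
  proof (cases "\<forall>\<beta>\<in>P. c \<beta> \<ge> 0")
    case True
    then show ?thesis using c(1) \<open>\<gamma> \<in> R\<close> unfolding pos_roots_def by blast
  next
    case False
    then have "\<forall>\<beta>\<in>P. - c \<beta> \<ge> 0" using c(2) by auto
    moreover have "- \<gamma> = (\<Sum>\<beta>\<in>P. of_int (- c \<beta>) *\<^sub>R \<beta>)"
      using c(1) by (simp add: sum_negf[symmetric])
    ultimately have "- \<gamma> \<in> pos_roots R P"
      using root_system_uminus[OF R \<open>\<gamma> \<in> R\<close>] unfolding pos_roots_def
      by (auto intro!: exI[of _ "\<lambda>\<beta>. - c \<beta>"])
    then show ?thesis ..
  qed
next
  fix \<gamma> assume "\<gamma> \<in> pos_roots R P"
  then obtain c where c: "\<gamma> = (\<Sum>\<beta>\<in>P. of_int (c \<beta>) *\<^sub>R \<beta>)" "\<forall>\<beta>\<in>P. c \<beta> \<ge> 0"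
    and "\<gamma> \<in> R"
    unfolding pos_roots_def by blast
  show "- \<gamma> \<notin> pos_roots R P"
  proof
    assume "- \<gamma> \<in> pos_roots R P"
    then obtain d where d: "- \<gamma> = (\<Sum>\<beta>\<in>P. of_int (d \<beta>) *\<^sub>R \<beta>)" "\<forall>\<beta>\<in>P. d \<beta> \<ge> 0"
      unfolding pos_roots_def by blast
    have "\<gamma> = (\<Sum>\<beta>\<in>P. of_int (- d \<beta>) *\<^sub>R \<beta>)"
      using arg_cong[OF d(1), of uminus] by (simp add: sum_negf)
    then have "\<forall>\<beta>\<in>P. c \<beta> = - d \<beta>"
      using simple_system_int_coeffs_eq[OF P, of c "\<lambda>\<beta>. - d \<beta>"] c(1) by simp
    then have "\<forall>\<beta>\<in>P. c \<beta> = 0" using c(2) d(2) by force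
    then have "\<gamma> = 0" using c(1) by simp
    then show False using root_system_nonzero[OF R \<open>\<gamma> \<in> R\<close>] by simp
  qed
qed

lemma reflection_coeffs:
  assumes "finite P" "\<beta> \<in> P" "\<gamma> = (\<Sum>\<delta>\<in>P. of_int (c \<delta>) *\<^sub>R \<delta>)"
    and "\<gamma> \<bullet> coroot \<beta> = of_int k"
  shows "reflection \<beta> \<gamma> = (\<Sum>\<delta>\<in>P. of_int (c \<delta> - (if \<delta> = \<beta> then k else 0)) *\<^sub>R \<delta>)"
proof -
  have "(\<Sum>\<delta>\<in>P. of_int (c \<delta> - (if \<delta> = \<beta> then k else 0)) *\<^sub>R \<delta>)
      = (\<Sum>\<delta>\<in>P. of_int (c \<delta>) *\<^sub>R \<delta> - (if \<delta> = \<beta> then of_int k *\<^sub>R \<delta> else 0))"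
    by (intro sum.cong) (auto simp: scaleR_diff_left)
  also have "\<dots> = \<gamma> - (\<Sum>\<delta>\<in>P. if \<delta> = \<beta> then of_int k *\<^sub>R \<delta> else 0)"
    by (simp add: sum_subtractf assms(3))
  also have "\<dots> = \<gamma> - of_int k *\<^sub>R \<beta>"
    using assms(1,2) by simp
  finally show ?thesis
    using assms(4) by (simp add: reflection_def)
qed

lemma simple_reflection_coeffs_nonneg:
  assumes R: "root_system R" and P: "simple_system R P"
    and "\<beta> \<in> P" "\<gamma> \<in> R" "\<gamma> \<noteq> \<beta>"
    and \<gamma>: "\<gamma> = (\<Sum>\<delta>\<in>P. of_int (c \<delta>) *\<^sub>R \<delta>)" "\<forall>\<delta>\<in>P. c \<delta> \<ge> 0"
    and k: "\<gamma> \<bullet> coroot \<beta> = of_int k"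
  shows "\<forall>\<delta>\<in>P. c \<delta> - (if \<delta> = \<beta> then k else 0) \<ge> 0"
proof -
  define c' where "c' \<delta> = c \<delta> - (if \<delta> = \<beta> then k else 0)" for \<delta>
  have "\<beta> \<in> R" using simple_system_subset[OF P] \<open>\<beta> \<in> P\<close> by blast
  have reflection_eq: "reflection \<beta> \<gamma> = (\<Sum>\<delta>\<in>P. of_int (c' \<delta>) *\<^sub>R \<delta>)"
    unfolding c'_def
    using reflection_coeffs[OF simple_system_finite[OF P] \<open>\<beta> \<in> P\<close> \<gamma>(1) k] .
  obtain d where d: "reflection \<beta> \<gamma> = (\<Sum>\<delta>\<in>P. of_int (d \<delta>) *\<^sub>R \<delta>)"
      "(\<forall>\<delta>\<in>P. d \<delta> \<ge> 0) \<or> (\<forall>\<delta>\<in>P. d \<delta> \<le> 0)"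
    using simple_system_coeffs[OF P root_system_reflection[OF R \<open>\<beta> \<in> R\<close> \<open>\<gamma> \<in> R\<close>]] .
  have "(\<Sum>\<delta>\<in>P. of_int (d \<delta>) *\<^sub>R \<delta>) = (\<Sum>\<delta>\<in>P. of_int (c' \<delta>) *\<^sub>R \<delta>)"
    using d(1) reflection_eq by simp
  then have dc': "\<forall>\<delta>\<in>P. d \<delta> = c' \<delta>"
    using simple_system_int_coeffs_eq[OF P] by blast
  show ?thesis
  proof (rule ccontr)
    assume "\<not> ?thesis"
    then have "\<not> (\<forall>\<delta>\<in>P. c' \<delta> \<ge> 0)"
      unfolding c'_def .
    then have c'_nonpos: "\<forall>\<delta>\<in>P. c' \<delta> \<le> 0"
      using d(2) dc' by auto
    have "c \<delta> = 0" if "\<delta> \<in> P" "\<delta> \<noteq> \<beta>" for \<delta>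
    proof -
      have "c' \<delta> = c \<delta>" using that(2) by (simp add: c'_def)
      then show ?thesis using c'_nonpos \<gamma>(2) that(1) by force
    qed
    then have "\<gamma> = (\<Sum>\<delta>\<in>P. if \<delta> = \<beta> then of_int (c \<beta>) *\<^sub>R \<delta> else 0)"
      unfolding \<gamma>(1) by (intro sum.cong) auto
    then have \<gamma>_eq: "\<gamma> = of_int (c \<beta>) *\<^sub>R \<beta>"
      using simple_system_finite[OF P] \<open>\<beta> \<in> P\<close> by simp
    then have "real_of_int (c \<beta>) = 1 \<or> real_of_int (c \<beta>) = -1"
      using root_system_reduced[OF R \<open>\<beta> \<in> R\<close>] \<open>\<gamma> \<in> R\<close> by blast
    then have "real_of_int (c \<beta>) = 1"
      using \<gamma>(2) \<open>\<beta> \<in> P\<close> by auto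
    then show False
      using \<gamma>_eq \<open>\<gamma> \<noteq> \<beta>\<close> by simp
  qed
qed

lemma pos_roots_reflection:
  assumes R: "root_system R" and P: "simple_system R P"
    and "\<beta> \<in> P" "\<gamma> \<in> pos_roots R P" "\<gamma> \<noteq> \<beta>"
  shows "reflection \<beta> \<gamma> \<in> pos_roots R P"
proof -
  have "\<beta> \<in> R" using simple_system_subset[OF P] \<open>\<beta> \<in> P\<close> by blast
  obtain c where \<gamma>: "\<gamma> \<in> R" "\<gamma> = (\<Sum>\<delta>\<in>P. of_int (c \<delta>) *\<^sub>R \<delta>)" "\<forall>\<delta>\<in>P. c \<delta> \<ge> 0"
    using \<open>\<gamma> \<in> pos_roots R P\<close> unfolding pos_roots_def by blast
  obtain k where k: "\<gamma> \<bullet> coroot \<beta> = of_int k"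
    using root_system_pairing_Ints[OF R \<open>\<beta> \<in> R\<close> \<gamma>(1)] by (auto elim: Ints_cases)
  show ?thesis
    using simple_reflection_coeffs_nonneg[OF R P \<open>\<beta> \<in> P\<close> \<gamma>(1) \<open>\<gamma> \<noteq> \<beta>\<close> \<gamma>(2,3) k]
      reflection_coeffs[OF simple_system_finite[OF P] \<open>\<beta> \<in> P\<close> \<gamma>(2) k]
      root_system_reflection[OF R \<open>\<beta> \<in> R\<close> \<gamma>(1)]
    unfolding pos_roots_def by (auto intro!: exI[of _ "\<lambda>\<delta>. c \<delta> - (if \<delta> = \<beta> then k else 0)"])
qed

lemma exists_simple_inner_pos:
  fixes \<gamma> :: "'a::euclidean_space"
  assumes "\<gamma> \<noteq> 0" "\<gamma> = (\<Sum>\<beta>\<in>P. of_int (c \<beta>) *\<^sub>R \<beta>)" "\<forall>\<beta>\<in>P. c \<beta> \<ge> 0"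
  shows "\<exists>\<beta>\<in>P. c \<beta> > 0 \<and> \<gamma> \<bullet> \<beta> > 0"
proof (rule ccontr)
  assume contra: "\<not> ?thesis"
  have "of_int (c \<beta>) * (\<gamma> \<bullet> \<beta>) \<le> 0" if "\<beta> \<in> P" for \<beta>
  proof (cases "c \<beta> = 0")
    case False
    then have "c \<beta> > 0" using assms(3) that by (simp add: order_less_le)
    moreover have "\<gamma> \<bullet> \<beta> \<le> 0"
      using contra that \<open>c \<beta> > 0\<close> by auto
    ultimately show ?thesis
      by (simp add: mult_nonneg_nonpos)
  qed simp
  then have "(\<Sum>\<beta>\<in>P. of_int (c \<beta>) * (\<gamma> \<bullet> \<beta>)) \<le> 0"
    by (simp add: sum_nonpos)
  moreover have "\<gamma> \<bullet> \<gamma> = (\<Sum>\<beta>\<in>P. of_int (c \<beta>) * (\<gamma> \<bullet> \<beta>))"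
    by (subst (2) assms(2)) (simp add: inner_sum_right)
  ultimately show False
    using assms(1) inner_gt_zero_iff[of \<gamma>] by linarith
qed

lemma pos_root_descent:
  assumes R: "root_system R" and P: "simple_system R P"
    and "\<gamma> \<in> R" "\<gamma> \<notin> P" and \<gamma>: "\<gamma> = (\<Sum>\<delta>\<in>P. of_int (c \<delta>) *\<^sub>R \<delta>)" "\<forall>\<delta>\<in>P. c \<delta> \<ge> 0"
  obtains \<beta> c' where "\<beta> \<in> P" "reflection \<beta> \<gamma> = (\<Sum>\<delta>\<in>P. of_int (c' \<delta>) *\<^sub>R \<delta>)"
    "\<forall>\<delta>\<in>P. c' \<delta> \<ge> 0" "sum c' P < sum c P"
proof -
  obtain \<beta> where "\<beta> \<in> P" "\<gamma> \<bullet> \<beta> > 0"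
    using exists_simple_inner_pos[OF root_system_nonzero[OF R \<open>\<gamma> \<in> R\<close>] \<gamma>] by blast
  have "\<beta> \<in> R" using simple_system_subset[OF P] \<open>\<beta> \<in> P\<close> by blast
  obtain k where k: "\<gamma> \<bullet> coroot \<beta> = of_int k"
    using root_system_pairing_Ints[OF R \<open>\<beta> \<in> R\<close> \<open>\<gamma> \<in> R\<close>] by (auto elim: Ints_cases)
  have "\<beta> \<bullet> \<beta> > 0"
    using root_system_nonzero[OF R \<open>\<beta> \<in> R\<close>] by simp
  then have "\<gamma> \<bullet> coroot \<beta> > 0"
    using \<open>\<gamma> \<bullet> \<beta> > 0\<close> by (simp add: coroot_def)
  then have "k > 0"
    using k by simp
  define c' where "c' \<delta> = c \<delta> - (if \<delta> = \<beta> then k else 0)" for \<delta>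
  have "\<gamma> \<noteq> \<beta>" using \<open>\<gamma> \<notin> P\<close> \<open>\<beta> \<in> P\<close> by blast
  have "sum c' P = sum c P - k"
    using simple_system_finite[OF P] \<open>\<beta> \<in> P\<close> by (simp add: c'_def sum_subtractf)
  then show ?thesis
    using that[OF \<open>\<beta> \<in> P\<close>, of c'] \<open>k > 0\<close>
      reflection_coeffs[OF simple_system_finite[OF P] \<open>\<beta> \<in> P\<close> \<gamma>(1) k]
      simple_reflection_coeffs_nonneg[OF R P \<open>\<beta> \<in> P\<close> \<open>\<gamma> \<in> R\<close> \<open>\<gamma> \<noteq> \<beta>\<close> \<gamma> k]
    unfolding c'_def by simp
qed

lemma inner_coroot_reflection:
  assumes "\<beta> \<noteq> 0" "\<gamma> \<noteq> 0"
  shows "\<sigma> \<bullet> coroot \<gamma> = \<sigma> \<bullet> coroot (reflection \<beta> \<gamma>) + (\<beta> \<bullet> coroot \<gamma>) * (\<sigma> \<bullet> coroot \<beta>)"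
  using coroot_reflection[OF assms] by (simp add: inner_diff_right)

lemma real_even_inner_coroots:
  assumes R: "root_system R" and P: "simple_system R P"
    and even: "\<forall>\<beta>\<in>P. real_even (\<sigma> \<bullet> coroot \<beta>)" and "\<alpha> \<in> R"
  shows "real_even (\<sigma> \<bullet> coroot \<alpha>)"
proof -
  have pos: "real_even (\<sigma> \<bullet> coroot \<gamma>)"
    if "\<gamma> \<in> R" "\<gamma> = (\<Sum>\<delta>\<in>P. of_int (c \<delta>) *\<^sub>R \<delta>)" "\<forall>\<delta>\<in>P. c \<delta> \<ge> 0" for \<gamma> c
    using that
  proof (induction "nat (sum c P)" arbitrary: \<gamma> c rule: less_induct)
    case less
    show ?case
    proof (cases "\<gamma> \<in> P")
      case True
      then show ?thesis using even by blast
    next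
      case False
      obtain \<beta> c' where \<beta>: "\<beta> \<in> P" "reflection \<beta> \<gamma> = (\<Sum>\<delta>\<in>P. of_int (c' \<delta>) *\<^sub>R \<delta>)"
          "\<forall>\<delta>\<in>P. c' \<delta> \<ge> 0" "sum c' P < sum c P"
        using pos_root_descent[OF R P less.prems(1) False less.prems(2,3)] .
      have "\<beta> \<in> R" using simple_system_subset[OF P] \<open>\<beta> \<in> P\<close> by blast
      have "sum c' P \<ge> 0"
        using \<beta>(3) by (simp add: sum_nonneg)
      then have "nat (sum c' P) < nat (sum c P)"
        using \<beta>(4) by simp
      then have "real_even (\<sigma> \<bullet> coroot (reflection \<beta> \<gamma>))"
        using less.hyps root_system_reflection[OF R \<open>\<beta> \<in> R\<close> less.prems(1)] \<beta>(2,3) by blast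
      moreover have "real_even ((\<beta> \<bullet> coroot \<gamma>) * (\<sigma> \<bullet> coroot \<beta>))"
        using real_even_mult_Ints root_system_pairing_Ints[OF R less.prems(1) \<open>\<beta> \<in> R\<close>]
          even \<open>\<beta> \<in> P\<close> by blast
      ultimately show ?thesis
        using inner_coroot_reflection root_system_nonzero[OF R] \<open>\<beta> \<in> R\<close> less.prems(1)
        by (metis real_even_add)
    qed
  qed
  then have "real_even (\<sigma> \<bullet> coroot \<gamma>)" if "\<gamma> \<in> pos_roots R P" for \<gamma>
    using that unfolding pos_roots_def by blast
  moreover have "\<alpha> \<in> pos_roots R P \<or> - \<alpha> \<in> pos_roots R P"
    using pos_roots_half[OF R P] \<open>\<alpha> \<in> R\<close> unfolding half_def by blast
  ultimately show ?thesis
    by (metis coroot_minus inner_minus_right minus_minus real_even_minus)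
qed

text \<open>The two sums differ by \<open>2 * sum f (A - B)\<close>, since \<open>B - A = - (A - B)\<close>.\<close>

lemma half_sum_diff_real_even:
  assumes "finite S" "half S A" "half S B"
    and odd: "\<And>\<gamma>. f (- \<gamma>) = - f \<gamma>" and int: "\<And>\<gamma>. \<gamma> \<in> S \<Longrightarrow> f \<gamma> \<in> \<int>"
  shows "real_even (sum f A - sum f B)"
proof -
  have fin: "finite A" "finite B"
    using assms(1-3) unfolding half_def by (auto intro: finite_subset)
  have "B - A = uminus ` (A - B)"
  proof (intro equalityI subsetI)
    fix \<gamma> assume "\<gamma> \<in> B - A"
    then have "- \<gamma> \<in> A - B"
      using assms(2,3) unfolding half_def by blast
    then show "\<gamma> \<in> uminus ` (A - B)"
      by (rule rev_image_eqI) simp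
  next
    fix \<gamma> assume "\<gamma> \<in> uminus ` (A - B)"
    then obtain \<delta> where "\<delta> \<in> A" "\<delta> \<notin> B" "\<gamma> = - \<delta>" by blast
    then show "\<gamma> \<in> B - A"
      using assms(2,3) unfolding half_def by blast
  qed
  then have "sum f (B - A) = - sum f (A - B)"
    by (simp add: sum.reindex inj_on_def odd sum_negf)
  moreover have "sum f A = sum f (A \<inter> B) + sum f (A - B)"
    using fin(1) by (rule sum.Int_Diff)
  moreover have "sum f B = sum f (A \<inter> B) + sum f (B - A)"
    using sum.Int_Diff[OF fin(2), of f A] by (simp add: Int_commute)
  ultimately have "sum f A - sum f B = 2 * sum f (A - B)"
    by simp
  moreover have "sum f (A - B) \<in> \<int>"
    using assms(2) int unfolding half_def by (intro Ints_sum) auto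
  ultimately show ?thesis
    unfolding real_even_def by (auto elim: Ints_cases)
qed

lemma koszul_number_eq_inner_coroot: "koszul_number R RH P \<alpha> = koszul_form R RH P \<bullet> coroot \<alpha>"
  by (simp add: koszul_number_def coroot_def)

lemma koszul_number_eq_sum:
  "koszul_number R RH P \<alpha> = (\<Sum>\<gamma>\<in>pos_roots R P - RH. \<gamma> \<bullet> coroot \<alpha>)"
  by (simp add: koszul_number_eq_inner_coroot koszul_form_def inner_sum_left)

lemma koszul_number_parity_independent:
  assumes R: "root_system R" and "simple_system R P" "simple_system R P'" "\<alpha> \<in> R"
  shows "real_even (koszul_number R (centralizer_roots R x) P \<alpha>
    - koszul_number R (centralizer_roots R x) P' \<alpha>)"
proof -
  have "half (R - centralizer_roots R x) (pos_roots R Q - centralizer_roots R x)"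
    if "simple_system R Q" for Q
    using pos_roots_half[OF R that] root_system_uminus[OF R]
    by (intro half_Diff) (auto simp: centralizer_roots_def)
  then show ?thesis
    unfolding koszul_number_eq_sum
    using assms root_system_finite[OF R] root_system_pairing_Ints[OF R \<open>\<alpha> \<in> R\<close>]
    by (intro half_sum_diff_real_even[where S = "R - centralizer_roots R x"]) auto
qed

lemma koszul_number_compact_simple_root:
  assumes R: "root_system R" and P: "simple_system R P"
    and "\<beta> \<in> P" "\<beta> \<in> centralizer_roots R x"
  shows "koszul_number R (centralizer_roots R x) P \<beta> = 0"
proof -
  let ?A = "pos_roots R P - centralizer_roots R x"
  \<comment> \<open>the reflection in \<open>\<beta>\<close> permutes \<open>?A\<close> and negates the pairing with \<open>coroot \<beta>\<close>\<close>
  have "\<beta> \<in> R" "\<beta> \<noteq> 0" "\<beta> \<bullet> x = 0"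
    using assms root_system_nonzero[OF R] unfolding simple_system_def centralizer_roots_def by auto
  have reflection_pos: "reflection \<beta> \<gamma> \<in> pos_roots R P"
    and reflection_not_compact: "reflection \<beta> \<gamma> \<notin> centralizer_roots R x"
    if "\<gamma> \<in> pos_roots R P" "\<gamma> \<notin> centralizer_roots R x" for \<gamma>
  proof -
    have "\<gamma> \<noteq> \<beta>" using that(2) assms(4) by blast
    then show "reflection \<beta> \<gamma> \<in> pos_roots R P"
      using pos_roots_reflection[OF R P \<open>\<beta> \<in> P\<close> that(1)] by blast
    have "reflection \<beta> \<gamma> \<bullet> x = \<gamma> \<bullet> x"
      using \<open>\<beta> \<bullet> x = 0\<close> by (simp add: reflection_def inner_diff_left)
    moreover have "\<gamma> \<in> R"
      using that(1) by (simp add: pos_roots_def)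
    ultimately show "reflection \<beta> \<gamma> \<notin> centralizer_roots R x"
      using that(2) unfolding centralizer_roots_def by auto
  qed
  have "(\<Sum>\<gamma>\<in>?A. \<gamma> \<bullet> coroot \<beta>) = (\<Sum>\<gamma>\<in>?A. reflection \<beta> \<gamma> \<bullet> coroot \<beta>)"
    by (rule sum.reindex_bij_witness[where i = "reflection \<beta>" and j = "reflection \<beta>"])
       (auto simp: reflection_reflection[OF \<open>\<beta> \<noteq> 0\<close>] reflection_pos reflection_not_compact)
  also have "\<dots> = - (\<Sum>\<gamma>\<in>?A. \<gamma> \<bullet> coroot \<beta>)"
    by (simp add: inner_reflection_coroot[OF \<open>\<beta> \<noteq> 0\<close>] sum_negf)
  finally show ?thesis
    by (simp add: koszul_number_eq_sum)
qed

lemma koszul_numbers_real_even_iff: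
  assumes R: "root_system R" and P: "simple_system R P"
  shows "(\<forall>\<beta>\<in>P - centralizer_roots R x. real_even (koszul_number R (centralizer_roots R x) P \<beta>))
    \<longleftrightarrow> (\<forall>\<alpha>\<in>R. real_even (koszul_number R (centralizer_roots R x) P \<alpha>))"
proof
  assume even: "\<forall>\<beta>\<in>P - centralizer_roots R x. real_even (koszul_number R (centralizer_roots R x) P \<beta>)"
  have "real_even (koszul_number R (centralizer_roots R x) P \<beta>)" if "\<beta> \<in> P" for \<beta>
  proof (cases "\<beta> \<in> centralizer_roots R x")
    case True
    then have "koszul_number R (centralizer_roots R x) P \<beta> = 0"
      by (rule koszul_number_compact_simple_root[OF R P that])
    then show ?thesis by (simp add: real_even_def)
  next
    case False
    then show ?thesis using even that by blast
  qed
  then show "\<forall>\<alpha>\<in>R. real_even (koszul_number R (centralizer_roots R x) P \<alpha>)"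
    unfolding koszul_number_eq_inner_coroot by (blast intro: real_even_inner_coroots[OF R P])
next
  assume "\<forall>\<alpha>\<in>R. real_even (koszul_number R (centralizer_roots R x) P \<alpha>)"
  then show "\<forall>\<beta>\<in>P - centralizer_roots R x. real_even (koszul_number R (centralizer_roots R x) P \<beta>)"
    using simple_system_subset[OF P] by blast
qed

theorem mainTheorem16:
  fixes R :: "'a::euclidean_space set" and x :: 'a and P P' :: "'a set"
  assumes "root_system R"
    and "invariant_complex_structure R (centralizer_roots R x) P"
    and "invariant_complex_structure R (centralizer_roots R x) P'"
  shows "(\<forall>\<beta>\<in>P - centralizer_roots R x.
            \<exists>m::int. koszul_number R (centralizer_roots R x) P \<beta> = 2 * of_int m)
     \<longleftrightarrow> (\<forall>\<beta>\<in>P' - centralizer_roots R x.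
            \<exists>m::int. koszul_number R (centralizer_roots R x) P' \<beta> = 2 * of_int m)"
proof -
  \<comment> \<open>only the base \<open>P\<close> of \<open>R\<close> matters, not that \<open>P \<inter> R\<^sub>H\<close> is a base of \<open>R\<^sub>H\<close>\<close>
  have P: "simple_system R P" and P': "simple_system R P'"
    using assms(2,3) unfolding invariant_complex_structure_def by blast+
  have "real_even (koszul_number R (centralizer_roots R x) P \<alpha>)
      \<longleftrightarrow> real_even (koszul_number R (centralizer_roots R x) P' \<alpha>)" if "\<alpha> \<in> R" for \<alpha>
    using real_even_diff_iff koszul_number_parity_independent[OF assms(1) P P' that] by blast
  then have "(\<forall>\<beta>\<in>P - centralizer_roots R x. real_even (koszul_number R (centralizer_roots R x) P \<beta>))
      \<longleftrightarrow> (\<forall>\<beta>\<in>P' - centralizer_roots R x. real_even (koszul_number R (centralizer_roots R x) P' \<beta>))"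
    unfolding koszul_numbers_real_even_iff[OF assms(1) P] koszul_numbers_real_even_iff[OF assms(1) P']
    by (rule ball_cong[OF refl])
  then show ?thesis
    unfolding real_even_def .
qed

end
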